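(* Let $\sigma\in S_n$ and let $f_\sigma=x_1\cdots x_n-x_{\sigma(1)}\cdots x_{\sigma(n)}$ in the free associative algebra. For $i\in\{1,\dots,n\}$ let $T_i(f_\sigma)=f_\sigma(x_1,\dots,x_{i-1},x_ix_{i+1},x_{i+2},\dots,x_{n+1})$. Then $T_i(f_\sigma)=x_1\cdots x_{n+1}-x_{\tau(1)}\cdots x_{\tau(n+1)}$ where $\tau=\hat s_{i+1}\,\sigma\,\hat s_{\sigma^{-1}(i)+1}^{-1}\in S_{n+1}$, with $\sigma$ regarded as the element of $S_{n+1}$ fixing $n+1$.
   Context: For $1\le m\le n+1$, $\hat s_m\in S_{n+1}$ denotes the cycle $(m,m+1,\ldots,n+1)$ (so $\hat s_{n+1}$ is the identity). Products of permutations are compositions of functions. *)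

theory Defs
  imports Main "HOL-Library.Poly_Mapping" "HOL-Combinatorics.Permutations"
begin

text \<open>Free associative algebra over a commutative ring 'a on variables x_1, x_2, ...
  (indexed by nat): finitely supported 'a-linear combinations of words (monomials),
  a word being a list of variable indices.\<close>
type_synonym 'a free_alg = "nat list \<Rightarrow>\<^sub>0 'a"

definition monom_w :: "nat list \<Rightarrow> 'a::comm_ring_1 free_alg" where
  "monom_w w = Poly_Mapping.single w 1"

definition subst_alg :: "(nat \<Rightarrow> nat list) \<Rightarrow> 'a::comm_ring_1 free_alg \<Rightarrow> 'a free_alg" where
  "subst_alg phi p = (\<Sum>w\<in>Poly_Mapping.keys p. Poly_Mapping.single (concat (map phi w)) (Poly_Mapping.lookup p w))"

definition f_perm :: "nat \<Rightarrow> (nat \<Rightarrow> nat) \<Rightarrow> 'a::comm_ring_1 free_alg" where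
  "f_perm n \<sigma> = monom_w [1..<n+1] - monom_w (map \<sigma> [1..<n+1])"

definition T_op :: "nat \<Rightarrow> 'a::comm_ring_1 free_alg \<Rightarrow> 'a free_alg" where
  "T_op i = subst_alg (\<lambda>j. if j < i then [j] else if j = i then [i, i+1] else [j+1])"

definition cyc :: "nat \<Rightarrow> nat \<Rightarrow> nat \<Rightarrow> nat" where
  "cyc N m k = (if m \<le> k \<and> k < N then k + 1 else if k = N then m else k)"

end

theory Submission imports Defs begin

text \<open>In \<open>x\<^sub>\<sigma>\<^sub>(\<^sub>1\<^sub>)\<cdots>x\<^sub>\<sigma>\<^sub>(\<^sub>n\<^sub>)\<close> the letter \<open>i\<close> sits at position \<open>j = \<sigma>\<^sup>-\<^sup>1(i)\<close> and becomes
  \<open>x\<^sub>i x\<^sub>i\<^sub>+\<^sub>1\<close>, while every other letter \<open>k\<close> becomes \<open>\<hat>s\<^sub>i\<^sub>+\<^sub>1(k)\<close>.  So the image word is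
  \<open>\<hat>s\<^sub>i\<^sub>+\<^sub>1 \<sigma>\<close> read along the positions \<open>1, \<dots>, j, n+1, j+1, \<dots>, n\<close>, and this position list
  is exactly the preimage of \<open>1, \<dots>, n+1\<close> under \<open>\<hat>s\<^sub>j\<^sub>+\<^sub>1\<close>.\<close>

lemma subst_alg_eq_sum_superset:
  assumes "finite S" "Poly_Mapping.keys p \<subseteq> S"
  shows "subst_alg phi p
    = (\<Sum>w\<in>S. Poly_Mapping.single (concat (map phi w)) (Poly_Mapping.lookup p w))"
  unfolding subst_alg_def
  by (rule sum.mono_neutral_left) (use assms in \<open>auto simp: in_keys_iff\<close>)

lemma subst_alg_diff:
  "subst_alg phi (p - q) = subst_alg phi p - subst_alg phi q"
proof -
  define S where "S = Poly_Mapping.keys p \<union> Poly_Mapping.keys q"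
  have S: "finite S" "Poly_Mapping.keys p \<subseteq> S" "Poly_Mapping.keys q \<subseteq> S"
    "Poly_Mapping.keys (p - q) \<subseteq> S"
    unfolding S_def using keys_diff[of p q] by auto
  show ?thesis
    unfolding subst_alg_eq_sum_superset[OF S(1,4)] subst_alg_eq_sum_superset[OF S(1,2)]
      subst_alg_eq_sum_superset[OF S(1,3)]
    by (simp add: lookup_minus single_diff sum_subtractf)
qed

lemma subst_alg_monom_w:
  "subst_alg phi (monom_w w) = monom_w (concat (map phi w))"
  by (simp add: subst_alg_def monom_w_def)

definition T_subst :: "nat \<Rightarrow> nat \<Rightarrow> nat list" where
  "T_subst i j = (if j < i then [j] else if j = i then [i, i+1] else [j+1])"

lemma T_op_eq_subst_alg: "T_op i = subst_alg (T_subst i)"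
  by (simp add: T_op_def T_subst_def [abs_def])

lemma T_subst_eq_cyc: "k \<noteq> i \<Longrightarrow> k < N \<Longrightarrow> T_subst i k = [cyc N (i+1) k]"
  by (auto simp: T_subst_def cyc_def)

lemma cyc_permutes: "m \<le> N \<Longrightarrow> cyc N m permutes {m..N}"
proof (rule bij_imp_permutes)
  assume "m \<le> N"
  have "inj_on (cyc N m) {m..N}" "cyc N m ` {m..N} \<subseteq> {m..N}"
    by (auto simp: inj_on_def cyc_def)
  then show "bij_betw (cyc N m) {m..N} {m..N}"
    by (simp add: bij_betw_def endo_inj_surj)
qed (auto simp: cyc_def)

lemma map_cyc_upt:
  assumes "a \<le> m" "m \<le> N"
  shows "map (cyc N m) ([a..<m] @ N # [m..<N]) = [a..<N+1]"
proof -
  have "map (cyc N m) [a..<m] = [a..<m]"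
    using assms by (intro map_idI) (auto simp: cyc_def)
  moreover have "map (cyc N m) [m..<N] = map Suc [m..<N]"
    by (rule map_cong) (auto simp: cyc_def)
  moreover have "[a..<N+1] = [a..<m] @ [m..<N+1]"
    using upt_add_eq_append[of a m "N+1-m"] assms by simp
  ultimately show ?thesis
    using assms by (simp add: cyc_def upt_conv_Cons map_Suc_upt)
qed

lemma concat_map_singleton:
  "(\<And>x. x \<in> set xs \<Longrightarrow> f x = [g x]) \<Longrightarrow> concat (map f xs) = map g xs"
  by (induct xs) auto

lemma upt_split_at:
  "a \<le> j \<Longrightarrow> j < b \<Longrightarrow> [a..<b] = [a..<j] @ j # [j+1..<b]"
  using upt_add_eq_append[of a j "b-j"] by (simp add: upt_conv_Cons)

lemma concat_map_T_subst_perm: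
  assumes \<sigma>: "\<sigma> permutes {1..n}" and i: "i \<in> {1..n}"
  shows "concat (map (T_subst i) (map \<sigma> [1..<n+1]))
    = map (cyc (n+1) (i+1) \<circ> \<sigma> \<circ> inv (cyc (n+1) (inv \<sigma> i + 1))) [1..<n+2]"
proof -
  define j where "j = inv \<sigma> i"
  define \<rho> where "\<rho> = cyc (n+1) (i+1) \<circ> \<sigma>"
  define c where "c = cyc (n+1) (j+1)"
  have j: "j \<in> {1..n}" "\<sigma> j = i"
    unfolding j_def using i permutes_in_image[OF permutes_inv[OF \<sigma>], of i]
      permutes_inverses(1)[OF \<sigma>, of i]
    by auto
  have \<sigma>_not_i: "\<sigma> p \<noteq> i" if "p \<noteq> j" for p
    using that permutes_inverses(2)[OF \<sigma>, of p] unfolding j_def by auto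
  have \<sigma>_in: "\<sigma> p < n+1" if "p \<in> {1..n}" for p
    using permutes_in_image[OF \<sigma>, of p] that by simp
  have \<rho>_j: "\<rho> j = i" and \<rho>_Suc_n: "\<rho> (n+1) = i+1"
    using j i permutes_not_in[OF \<sigma>, of "n+1"] by (auto simp: \<rho>_def cyc_def)
  have T_subst_\<sigma>: "T_subst i (\<sigma> p) = [\<rho> p]" if "p \<in> {1..n}" "p \<noteq> j" for p
    using T_subst_eq_cyc \<sigma>_not_i \<sigma>_in that by (simp add: \<rho>_def)
  have left: "concat (map (T_subst i) (map \<sigma> [1..<j])) = map \<rho> [1..<j]"
    unfolding map_map by (rule concat_map_singleton) (use j T_subst_\<sigma> in auto)
  have right: "concat (map (T_subst i) (map \<sigma> [j+1..<n+1])) = map \<rho> [j+1..<n+1]"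
    unfolding map_map by (rule concat_map_singleton) (use j T_subst_\<sigma> in auto)
  have "concat (map (T_subst i) (map \<sigma> [1..<n+1]))
      = map \<rho> [1..<j] @ [i, i+1] @ map \<rho> [j+1..<n+1]"
    using upt_split_at[of 1 j "n+1"] j left right by (simp add: T_subst_def)
  also have "\<dots> = map \<rho> ([1..<j+1] @ (n+1) # [j+1..<n+1])"
    using \<rho>_j \<rho>_Suc_n j(1) by simp
  also have "\<dots> = map (\<rho> \<circ> inv c) (map c ([1..<j+1] @ (n+1) # [j+1..<n+1]))"
    using permutes_inverses(2)[OF cyc_permutes, of "j+1" "n+1"] j by (simp add: c_def)
  also have "\<dots> = map (\<rho> \<circ> inv c) [1..<n+2]"
    using map_cyc_upt[of 1 "j+1" "n+1"] j by (simp add: c_def)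
  finally show ?thesis
    by (simp add: \<rho>_def c_def j_def)
qed

theorem lemma2p6:
  fixes \<sigma> :: "nat \<Rightarrow> nat" and n i :: nat
  assumes "\<sigma> permutes {1..n}"
    and "i \<in> {1..n}"
  shows "(T_op i (f_perm n \<sigma>) :: 'a::comm_ring_1 free_alg)
           = monom_w [1..<n+2]
             - monom_w (map (cyc (n+1) (i+1) \<circ> \<sigma> \<circ> inv (cyc (n+1) (inv \<sigma> i + 1))) [1..<n+2])"
proof -
  have "cyc (n+1) (i+1) \<circ> id \<circ> inv (cyc (n+1) (i+1)) = id"
    using permutes_inv_o(1)[OF cyc_permutes, of "i+1" "n+1"] assms(2) by simp
  then have "concat (map (T_subst i) [1..<n+1]) = [1..<n+2]"
    using concat_map_T_subst_perm[OF permutes_id assms(2)] by (simp only: inv_id id_apply list.map_id)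
  then show ?thesis
    by (simp only: f_perm_def T_op_eq_subst_alg subst_alg_diff subst_alg_monom_w
        concat_map_T_subst_perm[OF assms])
qed

end
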